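(* Let $\mathcal G=(\bar Q,\mu,\eta)$ be $\sigma$-admissible. For any policy $\pi$, the shielded policy $\pi'=\mathcal G(\pi)$ satisfies $$\bar V^{\pi'}(d_0)\le \bar Q(d_0,\mu)+\frac{\min\{\sigma+\eta,2\gamma\}}{1-\gamma}.$$
   Context: $\mathcal M=(\mathcal S,\mathcal A,P,r,\gamma)$ is a discounted MDP with discrete state space $\mathcal S$, discrete action space $\mathcal A$, transition kernel $P$, reward $r\in[0,1]$, discount $\gamma\in[0,1)$, initial distribution $d_0$. $\mathcal S$ contains two distinguished states $s_\triangleright,s_\circ$; $\mathcal S_{\mathrm{unsafe}}=\{s_\triangleright,s_\circ\}$, $\mathcal S_{\mathrm{safe}}=\mathcal S\setminus\mathcal S_{\mathrm{unsafe}}$. From $s_\triangleright$ every action leads to $s_\circ$ w.p. 1, $s_\circ$ is absorbing, and $d_0(s_\circ)=0$. Cost $c(s,a)=\mathbb 1\{s=s_\triangleright\}$; $\bar V^\pi(s)=\mathbb E[\sum_{t\ge0}\gamma^tc(s_t,a_t)\mid s_0=s]$ for trajectories of the stationary policy $\pi$ in $\mathcal M$, and $\bar V^\pi(d_0)=\mathbb E_{s\sim d_0}\bar V^\pi(s)$. For $g:\mathcal S\times\mathcal A\to\mathbb R$ and a policy $\mu$, $g(s,\mu)=\mathbb E_{a\sim\mu(\cdot|s)}g(s,a)$ and $g(d_0,\mu)=\mathbb E_{s\sim d_0}g(s,\mu)$. Intervention rule: a triple $\mathcal G=(\bar Q,\mu,\eta)$ with backup policy $\mu$, threshold $\eta\in[0,1]$,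 and $\bar Q:\mathcal S_{\mathrm{safe}}\times\mathcal A\to[0,1]$ extended by $\bar Q(s_\triangleright,a)=1$, $\bar Q(s_\circ,a)=0$. $\bar A(s,a)=\bar Q(s,a)-\bar Q(s,\mu)$; intervention set $\mathcal I=\{(s,a)\in\mathcal S_{\mathrm{safe}}\times\mathcal A:\bar A(s,a)>\eta\}$. The shielded policy $\pi'=\mathcal G(\pi)$ is $\pi'(a|s)=\pi(a|s)\mathbb 1\{(s,a)\notin\mathcal I\}+w(s)\mu(a|s)$, $w(s)=\sum_{\tilde a:(s,\tilde a)\in\mathcal I}\pi(\tilde a|s)$. $\mathcal G$ is $\sigma$-admissible ($\sigma\ge0$) if for all $s\in\mathcal S_{\mathrm{safe}},a\in\mathcal A$: $\bar Q(s,a)\in[0,\gamma]$ and $\bar Q(s,a)+\sigma\ge c(s,a)+\gamma\mathbb E_{s'\sim P(\cdot|s,a)}[\bar Q(s',\mu)]$. *)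

theory Defs
  imports "HOL-Probability.Probability_Mass_Function"
begin

(* States have type 's, actions type 'a; distributions are pmfs (countable support,
   i.e. discrete). *)

definition cost :: "'s \<Rightarrow> 's \<Rightarrow> 'a \<Rightarrow> real" where
  "cost s_tri s a = (if s = s_tri then 1 else 0)"

primrec state_dist :: "('s \<Rightarrow> 'a \<Rightarrow> 's pmf) \<Rightarrow> ('s \<Rightarrow> 'a pmf) \<Rightarrow> 's \<Rightarrow> nat \<Rightarrow> 's pmf" where
  "state_dist P pol s 0 = return_pmf s"
| "state_dist P pol s (Suc t) =
     bind_pmf (state_dist P pol s t) (\<lambda>x. bind_pmf (pol x) (\<lambda>a. P x a))"

text \<open>Cost value: Vbar(s) = E[ sum_t gamma^t c(s_t,a_t) | s_0 = s ], written as the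
  sum over t of gamma^t times the expected cost at time t.\<close>
definition Vbar :: "('s \<Rightarrow> 'a \<Rightarrow> 's pmf) \<Rightarrow> 's \<Rightarrow> real \<Rightarrow> ('s \<Rightarrow> 'a pmf) \<Rightarrow> 's \<Rightarrow> real" where
  "Vbar P s_tri \<gamma> pol s =
     (\<Sum>t. \<gamma> ^ t * measure_pmf.expectation (state_dist P pol s t)
                 (\<lambda>x. measure_pmf.expectation (pol x) (\<lambda>a. cost s_tri x a)))"

definition Vbar_init :: "('s \<Rightarrow> 'a \<Rightarrow> 's pmf) \<Rightarrow> 's \<Rightarrow> real \<Rightarrow> ('s \<Rightarrow> 'a pmf) \<Rightarrow> 's pmf \<Rightarrow> real" where
  "Vbar_init P s_tri \<gamma> pol d0 = measure_pmf.expectation d0 (Vbar P s_tri \<gamma> pol)"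

definition Qext :: "('s \<Rightarrow> 'a \<Rightarrow> real) \<Rightarrow> 's \<Rightarrow> 's \<Rightarrow> 's \<Rightarrow> 'a \<Rightarrow> real" where
  "Qext Q s_tri s_circ s a = (if s = s_tri then 1 else if s = s_circ then 0 else Q s a)"

definition polavg :: "('s \<Rightarrow> 'a \<Rightarrow> real) \<Rightarrow> ('s \<Rightarrow> 'a pmf) \<Rightarrow> 's \<Rightarrow> real" where
  "polavg g mu s = measure_pmf.expectation (mu s) (g s)"

definition Adv :: "('s \<Rightarrow> 'a \<Rightarrow> real) \<Rightarrow> 's \<Rightarrow> 's \<Rightarrow> ('s \<Rightarrow> 'a pmf) \<Rightarrow> 's \<Rightarrow> 'a \<Rightarrow> real" where
  "Adv Q s_tri s_circ mu s a = Qext Q s_tri s_circ s a - polavg (Qext Q s_tri s_circ) mu s"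

definition interv :: "('s \<Rightarrow> 'a \<Rightarrow> real) \<Rightarrow> 's \<Rightarrow> 's \<Rightarrow> ('s \<Rightarrow> 'a pmf) \<Rightarrow> real \<Rightarrow> ('s \<times> 'a) set" where
  "interv Q s_tri s_circ mu \<eta> =
     {(s, a). s \<notin> {s_tri, s_circ} \<and> Adv Q s_tri s_circ mu s a > \<eta>}"

definition shield :: "('s \<Rightarrow> 'a \<Rightarrow> real) \<Rightarrow> 's \<Rightarrow> 's \<Rightarrow> ('s \<Rightarrow> 'a pmf) \<Rightarrow> real
    \<Rightarrow> ('s \<Rightarrow> 'a pmf) \<Rightarrow> ('s \<Rightarrow> 'a pmf)" where
  "shield Q s_tri s_circ mu \<eta> pol = (\<lambda>s. embed_pmf (\<lambda>a.
     pmf (pol s) a * (if (s, a) \<notin> interv Q s_tri s_circ mu \<eta> then 1 else 0)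
     + measure_pmf.prob (pol s) {a'. (s, a') \<in> interv Q s_tri s_circ mu \<eta>} * pmf (mu s) a))"

definition admissible :: "('s \<Rightarrow> 'a \<Rightarrow> 's pmf) \<Rightarrow> 's \<Rightarrow> 's \<Rightarrow> real
    \<Rightarrow> ('s \<Rightarrow> 'a \<Rightarrow> real) \<Rightarrow> ('s \<Rightarrow> 'a pmf) \<Rightarrow> real \<Rightarrow> bool" where
  "admissible P s_tri s_circ \<gamma> Q mu \<sigma> \<longleftrightarrow>
     (\<forall>s a. s \<notin> {s_tri, s_circ} \<longrightarrow>
        0 \<le> Q s a \<and> Q s a \<le> \<gamma> \<and>
        Qext Q s_tri s_circ s a + \<sigma> \<ge> cost s_tri s a
          + \<gamma> * measure_pmf.expectation (P s a) (polavg (Qext Q s_tri s_circ) mu))"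

end

theory Submission
  imports Defs
begin

(* Write Qm(s) = Qbar(s,mu) and delta = min (sigma + eta) (2 gamma). On a safe state the shielded
   policy only plays actions whose advantage over mu is at most eta, so admissibility gives the
   one-step inequality  c(s) + gamma E[Qm(s')] <= Qm(s) + sigma + eta, while Qm in [0,1] gives the
   crude bound with 2 gamma instead; on the two unsafe states the inequality is exact. Hence
   f = Qm + delta / (1 - gamma) is a supersolution of the Bellman equation of the cost value of
   the shielded policy, and telescoping the discounted sum along the trajectory bounds that value
   by f. *)

lemma integrable_measure_pmf_bounded:
  fixes f :: "'a \<Rightarrow> real"
  assumes "\<And>x. \<bar>f x\<bar> \<le> B"
  shows "integrable (measure_pmf p) f"
  using assms by (intro measure_pmf.integrable_const_bound[where B=B]) auto

lemma expectation_pmf_between: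
  fixes f :: "'a \<Rightarrow> real"
  assumes "\<And>x. l \<le> f x \<and> f x \<le> u"
  shows "l \<le> measure_pmf.expectation p f \<and> measure_pmf.expectation p f \<le> u"
proof -
  have int: "integrable (measure_pmf p) f"
    using assms by (intro integrable_measure_pmf_bounded[where B="\<bar>l\<bar> + \<bar>u\<bar>"])
      (smt (verit))
  show ?thesis
    using assms by (auto intro!: measure_pmf.integral_le_const measure_pmf.integral_ge_const int)
qed

lemma expectation_pmf_mono_bounded:
  fixes f g :: "'a \<Rightarrow> real"
  assumes "\<And>x. f x \<le> g x" "\<And>x. \<bar>f x\<bar> \<le> B" "\<And>x. \<bar>g x\<bar> \<le> C"
  shows "measure_pmf.expectation p f \<le> measure_pmf.expectation p g"
  using assms by (intro integral_mono integrable_measure_pmf_bounded) auto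

lemma expectation_pmf_add_bounded:
  fixes f g :: "'a \<Rightarrow> real"
  assumes "\<And>x. \<bar>f x\<bar> \<le> B" "\<And>x. \<bar>g x\<bar> \<le> C"
  shows "measure_pmf.expectation p (\<lambda>x. f x + g x)
           = measure_pmf.expectation p f + measure_pmf.expectation p g"
  using assms by (intro Bochner_Integration.integral_add integrable_measure_pmf_bounded) auto

lemma expectation_bind_pmf_bounded:
  fixes f :: "'b \<Rightarrow> real"
  assumes "\<And>x. \<bar>f x\<bar> \<le> B"
  shows "measure_pmf.expectation (bind_pmf p q) f
           = measure_pmf.expectation p (\<lambda>x. measure_pmf.expectation (q x) f)"
  unfolding measure_pmf_bind
  using assms measurable_measure_pmf[of q]
  by (intro integral_bind[where K="count_space UNIV" and B=B and B'=1])
     (auto intro: measure_pmf.finite_measure_axioms simp: measure_pmf.emeasure_space_1)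

lemma pmf_bind_resample:
  "pmf (bind_pmf p (\<lambda>a. if a \<in> I then q else return_pmf a)) x
     = pmf p x * (if x \<notin> I then 1 else 0) + measure_pmf.prob p I * pmf q x"
proof -
  have "pmf (bind_pmf p (\<lambda>a. if a \<in> I then q else return_pmf a)) x
      = measure_pmf.expectation p (\<lambda>a. pmf q x * indicator I a + indicator ({x} - I) a)"
    unfolding pmf_bind by (intro Bochner_Integration.integral_cong) (auto simp: indicator_def)
  also have "\<dots> = pmf q x * measure_pmf.prob p I + measure_pmf.prob p ({x} - I)"
    by (subst expectation_pmf_add_bounded[where B="pmf q x" and C=1])
       (auto split: split_indicator)
  also have "measure_pmf.prob p ({x} - I) = pmf p x * (if x \<notin> I then 1 else 0)"
    by (cases "x \<in> I") (simp_all add: insert_Diff_if measure_pmf_single)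
  finally show ?thesis by simp
qed

lemma shield_eq_bind_pmf:
  "shield Q s_tri s_circ mu \<eta> pol s = bind_pmf (pol s)
     (\<lambda>a. if a \<in> {a. (s, a) \<in> interv Q s_tri s_circ mu \<eta>} then mu s else return_pmf a)"
proof -
  let ?resample = "bind_pmf (pol s)
     (\<lambda>a. if a \<in> {a. (s, a) \<in> interv Q s_tri s_circ mu \<eta>} then mu s else return_pmf a)"
  have "shield Q s_tri s_circ mu \<eta> pol s = embed_pmf (pmf ?resample)"
    unfolding shield_def pmf_bind_resample by simp
  also have "\<dots> = ?resample"
    by (rule type_definition.Rep_inverse[OF td_pmf_embed_pmf])
  finally show ?thesis .
qed

lemma expectation_shield:
  fixes h :: "'a \<Rightarrow> real"
  assumes "\<And>a. \<bar>h a\<bar> \<le> B"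
  shows "measure_pmf.expectation (shield Q s_tri s_circ mu \<eta> pol s) h
    = measure_pmf.expectation (pol s) (\<lambda>a.
        if (s, a) \<in> interv Q s_tri s_circ mu \<eta> then measure_pmf.expectation (mu s) h else h a)"
  unfolding shield_eq_bind_pmf expectation_bind_pmf_bounded[OF assms]
  by (intro Bochner_Integration.integral_cong) auto

lemma Qext_bounds:
  assumes "\<And>s a. s \<notin> {s_tri, s_circ} \<Longrightarrow> 0 \<le> Q s a \<and> Q s a \<le> 1"
  shows "0 \<le> Qext Q s_tri s_circ s a \<and> Qext Q s_tri s_circ s a \<le> 1"
  using assms[of s a] by (auto simp: Qext_def)

lemma polavg_Qext_bounds:
  assumes "\<And>s a. s \<notin> {s_tri, s_circ} \<Longrightarrow> 0 \<le> Q s a \<and> Q s a \<le> 1"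
  shows "0 \<le> polavg (Qext Q s_tri s_circ) mu s \<and> polavg (Qext Q s_tri s_circ) mu s \<le> 1"
  unfolding polavg_def by (intro expectation_pmf_between Qext_bounds assms)

lemma polavg_Qext_tri [simp]: "polavg (Qext Q s_tri s_circ) mu s_tri = 1"
  by (simp add: polavg_def Qext_def[abs_def])

lemma polavg_Qext_circ [simp]:
  "s_tri \<noteq> s_circ \<Longrightarrow> polavg (Qext Q s_tri s_circ) mu s_circ = 0"
  by (simp add: polavg_def Qext_def[abs_def])

lemma expectation_shield_Qext_le:
  assumes Qrange: "\<And>s a. s \<notin> {s_tri, s_circ} \<Longrightarrow> 0 \<le> Q s a \<and> Q s a \<le> 1"
    and "0 \<le> \<eta>" and safe: "s \<notin> {s_tri, s_circ}"
  shows "measure_pmf.expectation (shield Q s_tri s_circ mu \<eta> pol s) (Qext Q s_tri s_circ s)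
           \<le> polavg (Qext Q s_tri s_circ) mu s + \<eta>"
proof -
  have QE: "0 \<le> Qext Q s_tri s_circ s a \<and> Qext Q s_tri s_circ s a \<le> 1" for a
    using Qext_bounds[OF Qrange] .
  have "\<bar>Qext Q s_tri s_circ s a\<bar> \<le> 1" for a
    using QE by auto
  then have "measure_pmf.expectation (shield Q s_tri s_circ mu \<eta> pol s) (Qext Q s_tri s_circ s)
    = measure_pmf.expectation (pol s) (\<lambda>a. if (s, a) \<in> interv Q s_tri s_circ mu \<eta>
        then polavg (Qext Q s_tri s_circ) mu s else Qext Q s_tri s_circ s a)"
    unfolding polavg_def by (rule expectation_shield)
  also have "\<dots> \<le> polavg (Qext Q s_tri s_circ) mu s + \<eta>"
    using safe \<open>0 \<le> \<eta>\<close> QE polavg_Qext_bounds[OF Qrange, where mu=mu and s=s]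
    by (intro conjunct2[OF expectation_pmf_between[where l=0]])
       (auto simp: interv_def Adv_def)
  finally show ?thesis .
qed

lemma shield_Bellman_inequality:
  fixes P :: "'s \<Rightarrow> 'a \<Rightarrow> 's pmf"
  assumes "0 \<le> \<gamma>" and distinct: "s_tri \<noteq> s_circ"
    and tri_to_circ: "\<And>a. P s_tri a = return_pmf s_circ"
    and circ_absorb: "\<And>a. P s_circ a = return_pmf s_circ"
    and "0 \<le> \<eta>" "0 \<le> \<sigma>"
    and Qrange: "\<And>s a. s \<notin> {s_tri, s_circ} \<Longrightarrow> 0 \<le> Q s a \<and> Q s a \<le> 1"
    and adm: "admissible P s_tri s_circ \<gamma> Q mu \<sigma>"
  shows "(if x = s_tri then 1 else 0)
      + \<gamma> * measure_pmf.expectation (bind_pmf (shield Q s_tri s_circ mu \<eta> pol x) (P x))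
                (polavg (Qext Q s_tri s_circ) mu)
    \<le> polavg (Qext Q s_tri s_circ) mu x + min (\<sigma> + \<eta>) (2 * \<gamma>)"
proof -
  let ?Qm = "polavg (Qext Q s_tri s_circ) mu" and ?pol' = "shield Q s_tri s_circ mu \<eta> pol"
  define h where "h a = measure_pmf.expectation (P x a) ?Qm" for a
  have Qm: "0 \<le> ?Qm s \<and> ?Qm s \<le> 1" for s
    by (rule polavg_Qext_bounds[OF Qrange])
  then have h: "0 \<le> h a \<and> h a \<le> 1" for a
    unfolding h_def by (rule expectation_pmf_between)
  have "\<bar>?Qm s\<bar> \<le> 1" for s
    using Qm[of s] by auto
  then have next_step: "measure_pmf.expectation (bind_pmf (?pol' x) (P x)) ?Qm
      = measure_pmf.expectation (?pol' x) h"
    unfolding h_def by (rule expectation_bind_pmf_bounded)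
  show ?thesis
  proof (cases "x \<in> {s_tri, s_circ}")
    case True
    then have "h = (\<lambda>_. 0)"
      using distinct by (auto simp: h_def tri_to_circ circ_absorb)
    then show ?thesis
      using True next_step \<open>0 \<le> \<gamma>\<close> \<open>0 \<le> \<eta>\<close> \<open>0 \<le> \<sigma>\<close> distinct by auto
  next
    case safe: False
    have "\<gamma> * measure_pmf.expectation (?pol' x) h \<le> \<gamma>"
      using expectation_pmf_between[OF h, where p="?pol' x"] \<open>0 \<le> \<gamma>\<close> by (simp add: mult_left_le)
    then have by_range: "\<gamma> * measure_pmf.expectation (?pol' x) h \<le> ?Qm x + 2 * \<gamma>"
      using Qm[of x] \<open>0 \<le> \<gamma>\<close> by linarith
    have QE: "0 \<le> Qext Q s_tri s_circ x a \<and> Qext Q s_tri s_circ x a \<le> 1" for a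
      by (rule Qext_bounds[OF Qrange])
    have "\<gamma> * h a \<le> Qext Q s_tri s_circ x a + \<sigma>" for a
      using adm safe unfolding admissible_def h_def by (auto simp: cost_def)
    then have "\<gamma> * measure_pmf.expectation (?pol' x) h
        \<le> measure_pmf.expectation (?pol' x) (\<lambda>a. Qext Q s_tri s_circ x a + \<sigma>)"
      using h QE \<open>0 \<le> \<gamma>\<close> \<open>0 \<le> \<sigma>\<close>
      by (subst integral_mult_right_zero[symmetric],
          intro expectation_pmf_mono_bounded[where B=\<gamma> and C="1 + \<sigma>"])
         (auto simp: abs_mult intro: mult_left_le)
    also have "\<dots> = measure_pmf.expectation (?pol' x) (Qext Q s_tri s_circ x) + \<sigma>"
      using QE by (subst expectation_pmf_add_bounded[where B=1 and C="\<bar>\<sigma>\<bar>"]) auto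
    also have "\<dots> \<le> ?Qm x + \<eta> + \<sigma>"
      using expectation_shield_Qext_le[OF Qrange \<open>0 \<le> \<eta>\<close> safe] by simp
    finally have by_admissibility: "\<gamma> * measure_pmf.expectation (?pol' x) h \<le> ?Qm x + (\<sigma> + \<eta>)"
      by simp
    show ?thesis
      using safe next_step by_range by_admissibility by auto
  qed
qed

lemma discounted_sum_le_supersolution:
  fixes P :: "'s \<Rightarrow> 'a \<Rightarrow> 's pmf" and g f :: "'s \<Rightarrow> real"
  assumes "0 \<le> \<gamma>"
    and g: "\<And>x. 0 \<le> g x \<and> g x \<le> C" and f: "\<And>x. 0 \<le> f x \<and> f x \<le> B"
    and super: "\<And>x. g x + \<gamma> * measure_pmf.expectation (bind_pmf (pol x) (P x)) f \<le> f x"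
  shows "summable (\<lambda>t. \<gamma> ^ t * measure_pmf.expectation (state_dist P pol s t) g)"
    and "(\<Sum>t. \<gamma> ^ t * measure_pmf.expectation (state_dist P pol s t) g) \<le> f s"
proof -
  let ?E = "\<lambda>t. measure_pmf.expectation (state_dist P pol s t)"
  define Kf where "Kf x = measure_pmf.expectation (bind_pmf (pol x) (P x)) f" for x
  define a where "a t = \<gamma> ^ t * ?E t g" for t
  have Kf: "0 \<le> Kf x \<and> Kf x \<le> B" for x
    unfolding Kf_def by (rule expectation_pmf_between[OF f])
  have f_abs: "\<bar>f x\<bar> \<le> B" for x
    using f[of x] by auto
  have step: "?E t g + \<gamma> * ?E (Suc t) f \<le> ?E t f" for t
  proof -
    have "?E (Suc t) f = ?E t Kf"
      unfolding Kf_def state_dist.simps bind_assoc_pmf[symmetric]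
      by (rule expectation_bind_pmf_bounded[OF f_abs])
    then have "?E t g + \<gamma> * ?E (Suc t) f = ?E t (\<lambda>x. g x + \<gamma> * Kf x)"
      using g Kf \<open>0 \<le> \<gamma>\<close>
      by (subst expectation_pmf_add_bounded[where B=C and C="\<gamma> * B"])
         (auto simp: abs_mult intro: mult_left_mono)
    also have "\<dots> \<le> ?E t f"
      using g Kf f \<open>0 \<le> \<gamma>\<close> super[unfolded Kf_def[symmetric]]
      by (intro expectation_pmf_mono_bounded[where B="C + \<gamma> * B" and C=B])
         (auto simp: abs_mult intro!: add_mono mult_left_mono)
    finally show ?thesis .
  qed
  have telescope: "sum a {..<n} + \<gamma> ^ n * ?E n f \<le> f s" for n
  proof (induction n)
    case 0
    then show ?case by simp
  next
    case (Suc n)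
    have "sum a {..<Suc n} + \<gamma> ^ Suc n * ?E (Suc n) f
        = sum a {..<n} + \<gamma> ^ n * (?E n g + \<gamma> * ?E (Suc n) f)"
      by (simp add: a_def algebra_simps)
    also have "\<dots> \<le> sum a {..<n} + \<gamma> ^ n * ?E n f"
      using step[of n] \<open>0 \<le> \<gamma>\<close> by (simp add: mult_left_mono)
    finally show ?case
      using Suc by simp
  qed
  have partial_sums: "sum a {..<n} \<le> f s" for n
  proof -
    have "0 \<le> \<gamma> ^ n * ?E n f"
      using expectation_pmf_between[OF f, of "state_dist P pol s n"] \<open>0 \<le> \<gamma>\<close> by simp
    then show ?thesis
      using telescope[of n] by linarith
  qed
  have a_nonneg: "0 \<le> a t" for t
    using expectation_pmf_between[OF g, of "state_dist P pol s t"] \<open>0 \<le> \<gamma>\<close> by (simp add: a_def)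
  have "summable a"
    using a_nonneg partial_sums[of "Suc _"]
    by (intro bounded_imp_summable[where B="f s"]) (simp_all add: lessThan_Suc_atMost)
  then show "summable (\<lambda>t. \<gamma> ^ t * ?E t g)"
    by (simp add: a_def[abs_def])
  show "(\<Sum>t. \<gamma> ^ t * ?E t g) \<le> f s"
    using suminf_le_const[OF \<open>summable a\<close> partial_sums] by (simp add: a_def[abs_def])
qed

lemma Vbar_le_supersolution:
  fixes P :: "'s \<Rightarrow> 'a \<Rightarrow> 's pmf" and f :: "'s \<Rightarrow> real"
  assumes "0 \<le> \<gamma>" and f: "\<And>x. 0 \<le> f x \<and> f x \<le> B"
    and super: "\<And>x. (if x = s_tri then 1 else 0)
       + \<gamma> * measure_pmf.expectation (bind_pmf (pol x) (P x)) f \<le> f x"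
  shows "0 \<le> Vbar P s_tri \<gamma> pol s \<and> Vbar P s_tri \<gamma> pol s \<le> f s"
proof -
  have cost: "0 \<le> (if x = s_tri then 1 else 0 :: real) \<and> (if x = s_tri then 1 else 0 :: real) \<le> 1"
    for x
    by simp
  have "0 \<le> \<gamma> ^ t * measure_pmf.expectation (state_dist P pol s t) (\<lambda>x. if x = s_tri then 1 else 0)"
    for t
    using expectation_pmf_between[OF cost] \<open>0 \<le> \<gamma>\<close> by simp
  then show ?thesis
    unfolding Vbar_def cost_def
    using discounted_sum_le_supersolution[OF \<open>0 \<le> \<gamma>\<close> cost f super] by (simp add: suminf_nonneg)
qed

lemma Vbar_le_approximate_supersolution:
  fixes P :: "'s \<Rightarrow> 'a \<Rightarrow> 's pmf" and V :: "'s \<Rightarrow> real"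
  assumes "0 \<le> \<gamma>" "\<gamma> < 1" "0 \<le> \<delta>" and V: "\<And>x. 0 \<le> V x \<and> V x \<le> B"
    and approx: "\<And>x. (if x = s_tri then 1 else 0)
       + \<gamma> * measure_pmf.expectation (bind_pmf (pol x) (P x)) V \<le> V x + \<delta>"
  shows "0 \<le> Vbar P s_tri \<gamma> pol s \<and> Vbar P s_tri \<gamma> pol s \<le> V s + \<delta> / (1 - \<gamma>)"
proof -
  define f where "f x = V x + \<delta> / (1 - \<gamma>)" for x
  have "0 \<le> \<delta> / (1 - \<gamma>)"
    using assms by simp
  then have f: "0 \<le> f x \<and> f x \<le> B + \<delta> / (1 - \<gamma>)" for x
    using V[of x] by (simp add: f_def)
  have super: "(if x = s_tri then 1 else 0)
      + \<gamma> * measure_pmf.expectation (bind_pmf (pol x) (P x)) f \<le> f x" for x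
  proof -
    have "measure_pmf.expectation (bind_pmf (pol x) (P x)) f
        = measure_pmf.expectation (bind_pmf (pol x) (P x)) V + \<delta> / (1 - \<gamma>)"
      using V unfolding f_def
      by (subst expectation_pmf_add_bounded[where B=B and C="\<bar>\<delta> / (1 - \<gamma>)\<bar>"])
         (auto simp: abs_le_iff intro: order_trans)
    moreover have "\<delta> + \<gamma> * (\<delta> / (1 - \<gamma>)) = \<delta> / (1 - \<gamma>)"
      using \<open>\<gamma> < 1\<close> by (simp add: field_simps)
    ultimately show ?thesis
      using approx[of x] by (simp add: f_def algebra_simps)
  qed
  show ?thesis
    using Vbar_le_supersolution[OF \<open>0 \<le> \<gamma>\<close> f super] by (simp add: f_def)
qed

theorem mainTheorem2:
  fixes P :: "'s \<Rightarrow> 'a \<Rightarrow> 's pmf" and d0 :: "'s pmf"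
    and s_tri s_circ :: 's and \<gamma> \<eta> \<sigma> :: real
    and Q :: "'s \<Rightarrow> 'a \<Rightarrow> real" and mu pol :: "'s \<Rightarrow> 'a pmf"
  assumes gamma: "0 \<le> \<gamma>" "\<gamma> < 1"
    and distinct: "s_tri \<noteq> s_circ"
    and tri_to_circ: "\<And>a. P s_tri a = return_pmf s_circ"
    and circ_absorb: "\<And>a. P s_circ a = return_pmf s_circ"
    and d0_circ: "pmf d0 s_circ = 0"
    and eta: "0 \<le> \<eta>" "\<eta> \<le> 1"
    and sigma: "0 \<le> \<sigma>"
    and Qrange: "\<And>s a. s \<notin> {s_tri, s_circ} \<Longrightarrow> 0 \<le> Q s a \<and> Q s a \<le> 1"
    and adm: "admissible P s_tri s_circ \<gamma> Q mu \<sigma>"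
  shows "Vbar_init P s_tri \<gamma> (shield Q s_tri s_circ mu \<eta> pol) d0
           \<le> measure_pmf.expectation d0 (polavg (Qext Q s_tri s_circ) mu)
             + min (\<sigma> + \<eta>) (2 * \<gamma>) / (1 - \<gamma>)"
proof -
  let ?Qm = "polavg (Qext Q s_tri s_circ) mu" and ?pol' = "shield Q s_tri s_circ mu \<eta> pol"
  define C where "C = min (\<sigma> + \<eta>) (2 * \<gamma>) / (1 - \<gamma>)"
  have Qm: "0 \<le> ?Qm x \<and> ?Qm x \<le> 1" for x
    by (rule polavg_Qext_bounds[OF Qrange])
  have "0 \<le> C"
    using gamma eta(1) sigma by (simp add: C_def)
  have Vbar: "0 \<le> Vbar P s_tri \<gamma> ?pol' s \<and> Vbar P s_tri \<gamma> ?pol' s \<le> ?Qm s + C" for s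
    unfolding C_def using gamma eta(1) sigma
    by (intro Vbar_le_approximate_supersolution[where B=1] Qm
        shield_Bellman_inequality[OF gamma(1) distinct tri_to_circ circ_absorb eta(1) sigma Qrange adm])
       auto
  have "Vbar_init P s_tri \<gamma> ?pol' d0 \<le> measure_pmf.expectation d0 (\<lambda>s. ?Qm s + C)"
    unfolding Vbar_init_def
  proof (rule expectation_pmf_mono_bounded[where B="1 + C" and C="1 + C"])
    fix s
    show "Vbar P s_tri \<gamma> ?pol' s \<le> ?Qm s + C" "\<bar>Vbar P s_tri \<gamma> ?pol' s\<bar> \<le> 1 + C"
      using Vbar[of s] Qm[of s] by auto
    show "\<bar>?Qm s + C\<bar> \<le> 1 + C"
      using Qm[of s] \<open>0 \<le> C\<close> by auto
  qed
  also have "\<dots> = measure_pmf.expectation d0 ?Qm + C"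
    using Qm \<open>0 \<le> C\<close> by (subst expectation_pmf_add_bounded[where B=1 and C=C]) auto
  finally show ?thesis
    unfolding C_def .
qed

end
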